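(* Let $(\mathbf{P},d_{\mathbf{P}})$ be a finite metric poset and let $M,N$ be $\mathbf{P}$-modules. Then \[ \mathrm{dist}_{\mathrm{B}}\bigl(P^M_\bullet,P^N_\bullet\bigr)\ \le\ d_{\mathrm{GT}}(M,N). \]
   Context: Fix a field $k$; $\mathrm{vect}$ denotes the category of finite-dimensional $k$-vector spaces. A finite poset $\mathbf{P}$ is regarded as a category with a unique morphism $x\to y$ iff $x\le y$. A $\mathbf{P}$-module is a functor $\mathbf{P}\to\mathrm{vect}$; $\mathrm{vect}^{\mathbf{P}}$ is the category of $\mathbf{P}$-modules. For a monotone map $g:\mathbf{P}\to\mathbf{Q}$, $g^*:\mathrm{vect}^{\mathbf{Q}}\to\mathrm{vect}^{\mathbf{P}}$ is precomposition $N\mapsto N\circ g$. A finite metric poset is a finite poset $\mathbf{P}$ with a metric $d_{\mathbf{P}}$ on its underlying set. Galois insertions and transport. A Galois connection $f:\mathbf{Q}\rightleftarrows\mathbf{P}:g$ consists of monotone maps $f:\mathbf{Q}\to\mathbf{P}$, $g:\mathbf{P}\to\mathbf{Q}$ with $f(u)\le x\iff u\le g(x)$ for all $u\in\mathbf{Q},x\in\mathbf{P}$; it is a Galois insertion if moreover $f\circ g=\mathrm{id}_{\mathbf{P}}$. For $M,N\in\mathrm{vect}^{\mathbf{P}}$, a Galois coupling $(\mathbf{Q},f\dashv g,h\dashv i,\Gamma)$ of $(M,N)$ consists of a finite poset $\mathbf{Q}$, two Galois insertions $f:\mathbf{Q}\rightleftarrows\mathbf{P}:g$ and $h:\mathbf{Q}\rightleftarrows\mathbf{P}:i$,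 and $\Gamma\in\mathrm{vect}^{\mathbf{Q}}$ with $g^*\Gamma\cong M$ and $i^*\Gamma\cong N$. Its cost is $\mathrm{cost}(\Gamma)=\sup_{q\in\mathbf{Q}}d_{\mathbf{P}}(f(q),h(q))$. The Galois transport distance $d_{\mathrm{GT}}(M,N)$ is the infimum of the costs of all Galois couplings of $(M,N)$, and $\infty$ if there is none. Projectives and resolutions. For $x\in\mathbf{P}$, $k[\mathbf{P}]_x$ is the $\mathbf{P}$-module with $k[\mathbf{P}]_x(y)=k$ if $x\le y$ and $0$ otherwise, all structure maps between nonzero spaces being $\mathrm{id}_k$; up to isomorphism these are exactly the indecomposable projective $\mathbf{P}$-modules and every projective $\mathbf{P}$-module is a finite direct sum of them. For $x,y\in\mathbf{P}$ with $y\le x$ let $\rho(x\ge y):k[\mathbf{P}]_x\to k[\mathbf{P}]_y$ be the morphism which is $\mathrm{id}_k$ at every $z\ge x$ (it spans the one-dimensional Hom space); set $\rho(x\ge y)=0$ if $y\not\le x$. If $E=\bigoplus_{x\in\mathrm{smd}(E)}k[\mathbf{P}]_x$ and $F=\bigoplus_{y\in\mathrm{smd}(F)}k[\mathbf{P}]_y$ are projectives given with such decompositions ($\mathrm{smd}(E)$ is the finite multiset/list of indices), every morphism $\alpha:E\to F$ is uniquely a matrix $[a_{x,y}\rho(x\ge y)]$ with $a_{x,y}\in k$ and $a_{x,y}=0$ unless $x\ge y$; $\mathrm{Mat}(\alpha):=[a_{x,y}]_{(x,y)\in\mathrm{smd}(E)\times\mathrm{smd}(F)}$. A projective resolution of $M$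 is a complex $E_\bullet=(E_i,\partial^E_i:E_{i+1}\to E_i)_{i\ge0}$ of projective $\mathbf{P}$-modules with an augmentation $E_0\to M$ making $\cdots\to E_1\to E_0\to M\to0$ exact; each $E_i$ is considered with a fixed decomposition into indecomposable projectives, $|E_i|$ is the number of summands. $P^M_\bullet$ denotes a minimal projective resolution of $M$. $\mathsf{Res}(P^M_\bullet,P^N_\bullet)$ is the set of pairs $(E_\bullet,F_\bullet)$ where $E_\bullet$ is a projective resolution of $M$ and $F_\bullet$ one of $N$ with $|E_i|=|F_i|$ for all $i$. A matching of $(E_\bullet,F_\bullet)$ is a family $B=(B_i)_{i\ge0}$ of bijections $B_i:\mathrm{smd}(E_i)\to\mathrm{smd}(F_i)$ (of indexed multisets) such that for all $i\ge0$, $x\in\mathrm{smd}(E_i)$, $x'\in\mathrm{smd}(E_{i+1})$, the $(x',x)$-entry of $\mathrm{Mat}(\partial^E_i)$ equals the $(B_{i+1}(x'),B_i(x))$-entry of $\mathrm{Mat}(\partial^F_i)$. Its cost is $\mathrm{cost}(B)=\sup\{d_{\mathbf{P}}(x,B_i(x))\mid i\ge0,x\in\mathrm{smd}(E_i)\}$. $\mathrm{dist}_{\mathrm{R}}(E_\bullet,F_\bullet)$ is the infimum of costs over matchings ($\infty$ if none), and $\mathrm{dist}_{\mathrm{B}}(P^M_\bullet,P^N_\bullet):=\inf_{(E_\bullet,F_\bullet)\in\mathsf{Res}(P^M_\bullet,P^N_\bullet)}\mathrm{dist}_{\mathrm{R}}(E_\bullet,F_\bullet)$, which is $\infty$ if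 that set is empty. *)

theory Defs
  imports Complex_Main "HOL-Library.Extended_Real" "Jordan_Normal_Form.Matrix"
begin

definition finite_poset :: "'a set \<Rightarrow> ('a \<Rightarrow> 'a \<Rightarrow> bool) \<Rightarrow> bool" where
  "finite_poset X leq \<longleftrightarrow> finite X
     \<and> (\<forall>x\<in>X. leq x x)
     \<and> (\<forall>x\<in>X. \<forall>y\<in>X. leq x y \<and> leq y x \<longrightarrow> x = y)
     \<and> (\<forall>x\<in>X. \<forall>y\<in>X. \<forall>z\<in>X. leq x y \<and> leq y z \<longrightarrow> leq x z)"

definition metric_on :: "'a set \<Rightarrow> ('a \<Rightarrow> 'a \<Rightarrow> real) \<Rightarrow> bool" where
  "metric_on X d \<longleftrightarrow>
       (\<forall>x\<in>X. \<forall>y\<in>X. 0 \<le> d x y)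
     \<and> (\<forall>x\<in>X. \<forall>y\<in>X. d x y = 0 \<longleftrightarrow> x = y)
     \<and> (\<forall>x\<in>X. \<forall>y\<in>X. d x y = d y x)
     \<and> (\<forall>x\<in>X. \<forall>y\<in>X. \<forall>z\<in>X. d x z \<le> d x y + d y z)"

section \<open>Poset modules (functors to vect, via the skeleton: k^n and matrices)\<close>

record ('a, 'k) pmod =
  dimM :: "'a \<Rightarrow> nat"
  mapM :: "'a \<Rightarrow> 'a \<Rightarrow> 'k mat"

definition is_pmod :: "'a set \<Rightarrow> ('a \<Rightarrow> 'a \<Rightarrow> bool) \<Rightarrow> ('a, 'k::field) pmod \<Rightarrow> bool" where
  "is_pmod X leq M \<longleftrightarrow>
       (\<forall>x\<in>X. \<forall>y\<in>X. leq x y \<longrightarrow> mapM M x y \<in> carrier_mat (dimM M y) (dimM M x))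
     \<and> (\<forall>x\<in>X. mapM M x x = 1\<^sub>m (dimM M x))
     \<and> (\<forall>x\<in>X. \<forall>y\<in>X. \<forall>z\<in>X. leq x y \<and> leq y z \<longrightarrow> mapM M y z * mapM M x y = mapM M x z)"

definition pullback :: "('b \<Rightarrow> 'a) \<Rightarrow> ('a, 'k) pmod \<Rightarrow> ('b, 'k) pmod" where
  "pullback g N = \<lparr> dimM = (\<lambda>q. dimM N (g q)), mapM = (\<lambda>q q'. mapM N (g q) (g q')) \<rparr>"

definition pmod_iso :: "'a set \<Rightarrow> ('a \<Rightarrow> 'a \<Rightarrow> bool) \<Rightarrow> ('a, 'k::field) pmod \<Rightarrow> ('a, 'k) pmod \<Rightarrow> bool" where
  "pmod_iso X leq M N \<longleftrightarrow> (\<exists>\<phi>.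
       (\<forall>x\<in>X. \<phi> x \<in> carrier_mat (dimM N x) (dimM M x) \<and> invertible_mat (\<phi> x))
     \<and> (\<forall>x\<in>X. \<forall>y\<in>X. leq x y \<longrightarrow> \<phi> y * mapM M x y = mapM N x y * \<phi> x))"

definition galois_insertion ::
  "'b set \<Rightarrow> ('b \<Rightarrow> 'b \<Rightarrow> bool) \<Rightarrow> 'a set \<Rightarrow> ('a \<Rightarrow> 'a \<Rightarrow> bool)
   \<Rightarrow> ('b \<Rightarrow> 'a) \<Rightarrow> ('a \<Rightarrow> 'b) \<Rightarrow> bool" where
  "galois_insertion Q leQ P leP f g \<longleftrightarrow>
       (\<forall>u\<in>Q. f u \<in> P) \<and> (\<forall>x\<in>P. g x \<in> Q)
     \<and> (\<forall>u\<in>Q. \<forall>v\<in>Q. leQ u v \<longrightarrow> leP (f u) (f v))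
     \<and> (\<forall>x\<in>P. \<forall>y\<in>P. leP x y \<longrightarrow> leQ (g x) (g y))
     \<and> (\<forall>u\<in>Q. \<forall>x\<in>P. leP (f u) x \<longleftrightarrow> leQ u (g x))
     \<and> (\<forall>x\<in>P. f (g x) = x)"

text \<open>Galois couplings. The finite poset Q is taken with carrier a subset of nat;
  every finite poset is isomorphic to such a one.\<close>
definition galois_coupling ::
  "'a set \<Rightarrow> ('a \<Rightarrow> 'a \<Rightarrow> bool) \<Rightarrow> ('a, 'k::field) pmod \<Rightarrow> ('a, 'k) pmod
   \<Rightarrow> nat set \<Rightarrow> (nat \<Rightarrow> nat \<Rightarrow> bool) \<Rightarrow> (nat \<Rightarrow> 'a) \<Rightarrow> ('a \<Rightarrow> nat)
   \<Rightarrow> (nat \<Rightarrow> 'a) \<Rightarrow> ('a \<Rightarrow> nat) \<Rightarrow> (nat, 'k) pmod \<Rightarrow> bool" where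
  "galois_coupling P leq M N Q leQ f g h i \<Gamma> \<longleftrightarrow>
       finite_poset Q leQ
     \<and> galois_insertion Q leQ P leq f g
     \<and> galois_insertion Q leQ P leq h i
     \<and> is_pmod Q leQ \<Gamma>
     \<and> pmod_iso P leq (pullback g \<Gamma>) M
     \<and> pmod_iso P leq (pullback i \<Gamma>) N"

text \<open>Cost sup over Q of d(f q, h q); the sup of the empty family is 0 (distances are
  nonnegative).\<close>
definition coupling_cost :: "('a \<Rightarrow> 'a \<Rightarrow> real) \<Rightarrow> nat set \<Rightarrow> (nat \<Rightarrow> 'a) \<Rightarrow> (nat \<Rightarrow> 'a) \<Rightarrow> ereal" where
  "coupling_cost d Q f h = Sup (insert 0 ((\<lambda>q. ereal (d (f q) (h q))) ` Q))"

definition dGT :: "'a set \<Rightarrow> ('a \<Rightarrow> 'a \<Rightarrow> bool) \<Rightarrow> ('a \<Rightarrow> 'a \<Rightarrow> real)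
   \<Rightarrow> ('a, 'k::field) pmod \<Rightarrow> ('a, 'k) pmod \<Rightarrow> ereal" where
  "dGT P leq d M N = Inf {coupling_cost d Q f h | Q leQ f g h i \<Gamma>.
                           galois_coupling P leq M N Q leQ f g h i \<Gamma>}"

text \<open>A resolution \<open>E\<^sub>\<bullet>\<close>: \<open>gens E i\<close> is the list smd(E_i) of indices (E_i = \<Oplus> k[P]_x),
  \<open>bd E i\<close> is Mat(\<partial>_i) (rows indexed by smd(E_{i+1}), columns by smd(E_i)),
  and \<open>aug E j \<in> M(gens E 0 ! j)\<close> determines the augmentation E_0 \<rightarrow> M on the j-th summand.\<close>
record ('a, 'k) fres =
  gens :: "nat \<Rightarrow> 'a list"
  bd   :: "nat \<Rightarrow> 'k mat"
  aug  :: "nat \<Rightarrow> 'k vec"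

text \<open>Elements of E_i(z) = \<Oplus>_{j} k[P]_{L!j}(z): coordinate vectors supported on
  those j with L!j \<le> z.\<close>
definition freev :: "('a \<Rightarrow> 'a \<Rightarrow> bool) \<Rightarrow> 'a list \<Rightarrow> 'a \<Rightarrow> 'k::field vec set" where
  "freev leq L z = {v \<in> carrier_vec (length L). \<forall>j < length L. \<not> leq (L ! j) z \<longrightarrow> v $ j = 0}"

text \<open>The component of \<partial>_i at a point: the basis vector of summand x' goes to
  \<Sum>_x a_{x',x} e_x.\<close>
definition bdmap :: "('a, 'k::field) fres \<Rightarrow> nat \<Rightarrow> 'k vec \<Rightarrow> 'k vec" where
  "bdmap E i v = transpose_mat (bd E i) *\<^sub>v v"

definition augmat :: "('a \<Rightarrow> 'a \<Rightarrow> bool) \<Rightarrow> ('a, 'k::field) pmod \<Rightarrow> ('a, 'k) fres \<Rightarrow> 'a \<Rightarrow> 'k mat" where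
  "augmat leq M E z = mat (dimM M z) (length (gens E 0))
     (\<lambda>(r, j). if leq (gens E 0 ! j) z then (mapM M (gens E 0 ! j) z *\<^sub>v aug E j) $ r else 0)"

definition is_resolution :: "'a set \<Rightarrow> ('a \<Rightarrow> 'a \<Rightarrow> bool) \<Rightarrow> ('a, 'k::field) pmod
   \<Rightarrow> ('a, 'k) fres \<Rightarrow> bool" where
  "is_resolution X leq M E \<longleftrightarrow>
       (\<forall>i. set (gens E i) \<subseteq> X)
     \<and> (\<forall>i. bd E i \<in> carrier_mat (length (gens E (Suc i))) (length (gens E i)))
     \<and> (\<forall>i j' j. j' < length (gens E (Suc i)) \<longrightarrow> j < length (gens E i)
            \<longrightarrow> \<not> leq (gens E i ! j) (gens E (Suc i) ! j') \<longrightarrow> bd E i $$ (j', j) = 0)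
     \<and> (\<forall>j < length (gens E 0). aug E j \<in> carrier_vec (dimM M (gens E 0 ! j)))
     \<and> (\<forall>z\<in>X.
          (\<forall>w \<in> carrier_vec (dimM M z). \<exists>v \<in> freev leq (gens E 0) z. augmat leq M E z *\<^sub>v v = w)
        \<and> (\<forall>v \<in> freev leq (gens E 0) z.
              augmat leq M E z *\<^sub>v v = 0\<^sub>v (dimM M z)
              \<longleftrightarrow> (\<exists>u \<in> freev leq (gens E 1) z. bdmap E 0 u = v))
        \<and> (\<forall>i. \<forall>v \<in> freev leq (gens E (Suc i)) z.
              bdmap E i v = 0\<^sub>v (length (gens E i))
              \<longleftrightarrow> (\<exists>u \<in> freev leq (gens E (Suc (Suc i))) z. bdmap E (Suc i) u = v)))"

definition is_matching :: "('a, 'k) fres \<Rightarrow> ('a, 'k) fres \<Rightarrow> (nat \<Rightarrow> nat \<Rightarrow> nat) \<Rightarrow> bool" where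
  "is_matching E F B \<longleftrightarrow>
       (\<forall>i. bij_betw (B i) {..<length (gens E i)} {..<length (gens F i)})
     \<and> (\<forall>i j' j. j' < length (gens E (Suc i)) \<longrightarrow> j < length (gens E i)
            \<longrightarrow> bd E i $$ (j', j) = bd F i $$ (B (Suc i) j', B i j))"

definition matching_cost :: "('a \<Rightarrow> 'a \<Rightarrow> real) \<Rightarrow> ('a, 'k) fres \<Rightarrow> ('a, 'k) fres
   \<Rightarrow> (nat \<Rightarrow> nat \<Rightarrow> nat) \<Rightarrow> ereal" where
  "matching_cost d E F B = Sup (insert 0
      {ereal (d (gens E i ! j) (gens F i ! B i j)) | i j. j < length (gens E i)})"

definition distR :: "('a \<Rightarrow> 'a \<Rightarrow> real) \<Rightarrow> ('a, 'k) fres \<Rightarrow> ('a, 'k) fres \<Rightarrow> ereal" where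
  "distR d E F = Inf {matching_cost d E F B | B. is_matching E F B}"

text \<open>Res(P^M,P^N): pairs of resolutions of M and N with equally many summands in each degree.\<close>
definition distB :: "'a set \<Rightarrow> ('a \<Rightarrow> 'a \<Rightarrow> bool) \<Rightarrow> ('a \<Rightarrow> 'a \<Rightarrow> real)
   \<Rightarrow> ('a, 'k::field) pmod \<Rightarrow> ('a, 'k) pmod \<Rightarrow> ereal" where
  "distB P leq d M N = Inf {distR d E F | E F.
       is_resolution P leq M E \<and> is_resolution P leq N F
     \<and> (\<forall>i. length (gens E i) = length (gens F i))}"

end

theory Submission
  imports Defs "Jordan_Normal_Form.Matrix_Kernel"
begin

text \<open>Take a Galois coupling of \<open>M\<close> and \<open>N\<close> through \<open>\<Gamma>\<close> on \<open>Q\<close>, and a resolution \<open>E\<close> of \<open>\<Gamma>\<close> by sums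
  of modules \<open>k[Q]\<^sub>q\<close>; one exists since \<open>Q\<close> is finite, by covering kernels step by step with
  finitely many generators. As \<open>f q \<le> x \<longleftrightarrow> q \<le> g x\<close>, pulling back along \<open>g\<close> turns \<open>k[Q]\<^sub>q\<close> into
  \<open>k[P]\<^bsub>f q\<^esub>\<close> and keeps every boundary matrix, so \<open>g\<^sup>* E\<close> resolves \<open>g\<^sup>* \<Gamma> \<cong> M\<close> with summands
  \<open>f q\<close>; likewise \<open>i\<^sup>* E\<close> resolves \<open>N\<close> with summands \<open>h q\<close>. Matching the two summand by summand
  respects all matrices, and its cost \<open>sup d(f q, h q)\<close> is at most the cost of the coupling.\<close>

lemma finite_posetD:
  assumes "finite_poset X leq"
  shows "finite X" "\<And>x. x \<in> X \<Longrightarrow> leq x x"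
    "\<And>x y z. x \<in> X \<Longrightarrow> y \<in> X \<Longrightarrow> z \<in> X \<Longrightarrow> leq x y \<Longrightarrow> leq y z \<Longrightarrow> leq x z"
  using assms unfolding finite_poset_def by blast+

lemma is_pmodD:
  assumes "is_pmod X leq M"
  shows "\<And>x y. x \<in> X \<Longrightarrow> y \<in> X \<Longrightarrow> leq x y \<Longrightarrow> mapM M x y \<in> carrier_mat (dimM M y) (dimM M x)"
    "\<And>x. x \<in> X \<Longrightarrow> mapM M x x = 1\<^sub>m (dimM M x)"
    "\<And>x y z. x \<in> X \<Longrightarrow> y \<in> X \<Longrightarrow> z \<in> X \<Longrightarrow> leq x y \<Longrightarrow> leq y z
       \<Longrightarrow> mapM M y z * mapM M x y = mapM M x z"
  using assms unfolding is_pmod_def by blast+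

lemma galois_insertionD:
  assumes "galois_insertion Q leQ P leq f g"
  shows "\<And>u. u \<in> Q \<Longrightarrow> f u \<in> P" "\<And>x. x \<in> P \<Longrightarrow> g x \<in> Q"
    "\<And>u v. u \<in> Q \<Longrightarrow> v \<in> Q \<Longrightarrow> leQ u v \<Longrightarrow> leq (f u) (f v)"
    "\<And>x y. x \<in> P \<Longrightarrow> y \<in> P \<Longrightarrow> leq x y \<Longrightarrow> leQ (g x) (g y)"
    "\<And>u x. u \<in> Q \<Longrightarrow> x \<in> P \<Longrightarrow> leq (f u) x \<longleftrightarrow> leQ u (g x)"
  using assms unfolding galois_insertion_def by blast+

section \<open>Linear algebra\<close>

lemma mult_mat_vec_nth:
  assumes "C \<in> carrier_mat r n" and "v \<in> carrier_vec n" and "i < r"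
  shows "(C *\<^sub>v v) $ i = (\<Sum>j<n. C $$ (i, j) * v $ j)"
  using assms by (auto simp: scalar_prod_def lessThan_atLeast0 intro!: sum.cong)

lemma mult_mat_vec_eq_if_cols_eq:
  assumes A: "A \<in> carrier_mat r n" and B: "B \<in> carrier_mat r n" and v: "v \<in> carrier_vec n"
    and cols: "\<And>j. j < n \<Longrightarrow> v $ j \<noteq> 0 \<Longrightarrow> col A j = col B j"
  shows "A *\<^sub>v v = B *\<^sub>v v"
proof (rule eq_vecI)
  fix i assume "i < dim_vec (B *\<^sub>v v)"
  then have i: "i < r" using B by simp
  have "A $$ (i, j) * v $ j = B $$ (i, j) * v $ j" if "j < n" for j
    using cols[OF that] index_col[of i A j] index_col[of i B j] A B i that
    by (cases "v $ j = 0") auto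
  then show "(A *\<^sub>v v) $ i = (B *\<^sub>v v) $ i"
    using mult_mat_vec_nth[OF A v i] mult_mat_vec_nth[OF B v i] by simp
qed (use A B in simp)

lemma mult_mat_zero_vec:
  assumes "A \<in> carrier_mat r n"
  shows "A *\<^sub>v 0\<^sub>v n = (0\<^sub>v r :: 'k::field vec)"
  using assms by (intro eq_vecI) (auto simp: scalar_prod_def)

lemma zero_mat_mult_vec:
  assumes "u \<in> carrier_vec n"
  shows "0\<^sub>m r n *\<^sub>v u = (0\<^sub>v r :: 'k::field vec)"
  using assms by (intro eq_vecI) (auto simp: scalar_prod_def)

lemma invertible_matE:
  fixes A :: "'k::field mat"
  assumes A: "A \<in> carrier_mat n n" and inv: "invertible_mat A"
  obtains B where "B \<in> carrier_mat n n" "A * B = 1\<^sub>m n" "B * A = 1\<^sub>m n"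
proof -
  obtain B where AB: "A * B = 1\<^sub>m (dim_row A)" and BA: "B * A = 1\<^sub>m (dim_row B)"
    using inv unfolding invertible_mat_def inverts_mat_def by blast
  have "dim_col B = n" using AB A by (metis index_mult_mat(3) index_one_mat(3) carrier_matD(1))
  moreover have "dim_row B = n" using BA A by (metis index_mult_mat(3) index_one_mat(3) carrier_matD(2))
  ultimately show ?thesis using that AB BA A by auto
qed

lemma invertible_mult_mat_vec_eq_0_iff:
  fixes A :: "'k::field mat"
  assumes A: "A \<in> carrier_mat n n" and inv: "invertible_mat A" and v: "v \<in> carrier_vec n"
  shows "A *\<^sub>v v = 0\<^sub>v n \<longleftrightarrow> v = 0\<^sub>v n"
proof
  obtain B where B: "B \<in> carrier_mat n n" "B * A = 1\<^sub>m n"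
    using invertible_matE[OF A inv] by metis
  assume "A *\<^sub>v v = 0\<^sub>v n"
  then have "(B * A) *\<^sub>v v = 0\<^sub>v n" using A B v mult_mat_zero_vec by (metis assoc_mult_mat_vec)
  then show "v = 0\<^sub>v n" using B v by simp
qed (use A mult_mat_zero_vec in metis)

lemma invertible_mult_mat_vec_surj:
  fixes A :: "'k::field mat"
  assumes A: "A \<in> carrier_mat n n" and inv: "invertible_mat A" and w: "w \<in> carrier_vec n"
  obtains v where "v \<in> carrier_vec n" "A *\<^sub>v v = w"
proof -
  obtain B where B: "B \<in> carrier_mat n n" "A * B = 1\<^sub>m n"
    using invertible_matE[OF A inv] by metis
  have "A *\<^sub>v (B *\<^sub>v w) = w" using A B w by (simp flip: assoc_mult_mat_vec)
  then show ?thesis using B w by (intro that[of "B *\<^sub>v w"]) auto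
qed

lemma sum_nth_distinct:
  assumes "distinct xs"
  shows "(\<Sum>k<length xs. F (xs ! k)) = (\<Sum>x\<in>set xs. F x)"
  using sum.reindex_bij_betw[OF bij_betw_nth[OF assms refl refl], of F] by simp

lemma set_map_fst_Sigma:
  assumes "set ps = Sigma X B"
  shows "set (map fst ps) \<subseteq> X"
proof
  fix x assume "x \<in> set (map fst ps)"
  then obtain k where "(x, k) \<in> set ps" by auto
  then show "x \<in> X" using assms by blast
qed

lemma sum_select_fst:
  assumes ps: "distinct ps" "set ps = Sigma X (\<lambda>z. {..<m z})" and z: "z \<in> X"
  shows "(\<Sum>p<length ps. if fst (ps ! p) = z then F (snd (ps ! p)) else 0) = (\<Sum>k<m z. F k)"
proof -
  define G where "G q = (if fst q = z then F (snd q) else 0)" for q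
  have "(\<Sum>p<length ps. G (ps ! p)) = (\<Sum>q\<in>set ps. G q)" by (rule sum_nth_distinct[OF ps(1)])
  also have "\<dots> = (\<Sum>q\<in>Pair z ` {..<m z}. G q)"
    by (rule sum.mono_neutral_right[OF finite_set]) (use z ps(2) in \<open>auto simp: G_def\<close>)
  also have "\<dots> = (\<Sum>k<m z. F k)" by (subst sum.reindex) (auto simp: inj_on_def G_def)
  finally show ?thesis by (simp add: G_def)
qed

definition spans :: "nat \<Rightarrow> 'k::field vec list \<Rightarrow> 'k vec set \<Rightarrow> bool" where
  "spans n bs K \<longleftrightarrow> set bs \<subseteq> K \<and> (\<forall>v\<in>K. \<exists>c. \<forall>j<n. v $ j = (\<Sum>k<length bs. c k * bs ! k $ j))"

lemma spansD:
  assumes "spans n bs K"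
  shows "set bs \<subseteq> K" "\<And>v. v \<in> K \<Longrightarrow> \<exists>c. \<forall>j<n. v $ j = (\<Sum>k<length bs. c k * bs ! k $ j)"
  using assms unfolding spans_def by blast+

lemma mat_kernel_spanned:
  fixes C :: "'k::field mat"
  assumes C: "C \<in> carrier_mat r n"
  obtains bs where "spans n bs (mat_kernel C)"
proof -
  obtain B where fin: "finite B" and basis: "kernel.basis n C B" using kernel_basis_exists[OF C] by blast
  interpret K: kernel r n C by unfold_locales (rule C)
  have B: "B \<subseteq> mat_kernel C" and span: "K.span B = mat_kernel C"
    using basis unfolding K.Ker.basis_def by auto
  obtain bs where bs: "set bs = B" "distinct bs" using finite_distinct_list[OF fin] by blast
  have "\<exists>c. \<forall>j<n. v $ j = (\<Sum>k<length bs. c k * bs ! k $ j)" if v: "v \<in> mat_kernel C" for v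
  proof -
    have "v \<in> K.span B" using v span by simp
    then obtain a U where U: "finite U" "U \<subseteq> B" and vU: "v = K.lincomb a U"
      unfolding K.Ker.span_def by auto
    define a' where "a' x = (if x \<in> U then a x else 0)" for x
    have "v $ j = (\<Sum>k<length bs. a' (bs ! k) * bs ! k $ j)" if j: "j < n" for j
    proof -
      have "v $ j = (\<Sum>x\<in>U. a x * x $ j)" using K.lincomb_index[OF j] U B vU by auto
      also have "\<dots> = (\<Sum>x\<in>B. a' x * x $ j)"
        by (rule sum.mono_neutral_cong_left) (use U fin in \<open>auto simp: a'_def\<close>)
      also have "\<dots> = (\<Sum>k<length bs. a' (bs ! k) * bs ! k $ j)"
        unfolding bs(1)[symmetric] by (rule sum_nth_distinct[OF bs(2), symmetric])
      finally show ?thesis .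
    qed
    then show ?thesis by (intro exI[of _ "\<lambda>k. a' (bs ! k)"]) simp
  qed
  then show ?thesis using B bs(1) by (intro that[of bs]) (auto simp: spans_def)
qed

lemma support_kernel_spanned:
  fixes C :: "'k::field mat"
  assumes C: "C \<in> carrier_mat r n"
  obtains bs where "spans n bs {v \<in> mat_kernel C. \<forall>j<n. \<not> S j \<longrightarrow> v $ j = 0}"
proof -
  define D :: "'k mat" where "D = mat n n (\<lambda>(i, j). if i = j \<and> S j then 1 else 0)"
  have D: "D \<in> carrier_mat n n" by (simp add: D_def)
  have D_nth: "(D *\<^sub>v w) $ i = (if S i then w $ i else 0)" if w: "w \<in> carrier_vec n" and i: "i < n" for w i
  proof -
    have "(D *\<^sub>v w) $ i = (\<Sum>j<n. if j = i then (if S i then w $ i else 0) else 0)"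
      unfolding mult_mat_vec_nth[OF D w i] using i by (intro sum.cong) (auto simp: D_def)
    then show ?thesis using i by simp
  qed
  obtain bs0 where bs0: "spans n bs0 (mat_kernel (C * D))"
    using mat_kernel_spanned[of "C * D" r n] C D by auto
  have bs0_kernel: "b \<in> carrier_vec n" "(C * D) *\<^sub>v b = 0\<^sub>v r" if "b \<in> set bs0" for b
    using bs0 that mat_kernelD[of "C * D" r n b] C D unfolding spans_def by auto
  show ?thesis
  proof (rule that[of "map ((*\<^sub>v) D) bs0"], unfold spans_def, intro conjI ballI subsetI)
    fix b assume "b \<in> set (map ((*\<^sub>v) D) bs0)"
    then obtain b0 where b0: "b0 \<in> set bs0" "b = D *\<^sub>v b0" by auto
    show "b \<in> {v \<in> mat_kernel C. \<forall>j<n. \<not> S j \<longrightarrow> v $ j = 0}"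
      using bs0_kernel[OF b0(1)] b0(2) C D D_nth by (auto intro!: mat_kernelI)
  next
    fix v assume "v \<in> {v \<in> mat_kernel C. \<forall>j<n. \<not> S j \<longrightarrow> v $ j = 0}"
    then have v: "v \<in> carrier_vec n" "C *\<^sub>v v = 0\<^sub>v r" and supp: "\<And>j. j < n \<Longrightarrow> \<not> S j \<Longrightarrow> v $ j = 0"
      using mat_kernelD[OF C] by auto
    have Dv: "D *\<^sub>v v = v" using D_nth[OF v(1)] supp v D by (intro eq_vecI) auto
    have "v \<in> mat_kernel (C * D)" using C D v Dv by (intro mat_kernelI[of _ r n]) auto
    then obtain c where c: "\<And>j. j < n \<Longrightarrow> v $ j = (\<Sum>k<length bs0. c k * bs0 ! k $ j)"
      using bs0 unfolding spans_def by blast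
    have "v $ j = (\<Sum>k<length bs0. c k * (D *\<^sub>v bs0 ! k) $ j)" if j: "j < n" for j
      using c[OF j] supp[OF j] D_nth[OF _ j] bs0_kernel(1) by (cases "S j") auto
    then show "\<exists>c. \<forall>j<n. v $ j = (\<Sum>k<length (map ((*\<^sub>v) D) bs0). c k * map ((*\<^sub>v) D) bs0 ! k $ j)"
      by auto
  qed
qed

section \<open>Existence of resolutions\<close>

text \<open>\<open>A\<close> is a boundary matrix from the free module on \<open>L'\<close> to the one on \<open>L\<close> whose image at each
  \<open>z\<close> is the kernel of \<open>C z\<close>, the \<open>z\<close>-component of a map out of the free module on \<open>L\<close>.\<close>

definition kernel_cover :: "'a set \<Rightarrow> ('a \<Rightarrow> 'a \<Rightarrow> bool) \<Rightarrow> 'a list \<Rightarrow> ('a \<Rightarrow> 'k::field mat)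
    \<Rightarrow> ('a \<Rightarrow> nat) \<Rightarrow> 'a list \<Rightarrow> 'k mat \<Rightarrow> bool" where
  "kernel_cover X leq L C r L' A \<longleftrightarrow> set L' \<subseteq> X \<and> A \<in> carrier_mat (length L') (length L)
     \<and> (\<forall>j' j. j' < length L' \<longrightarrow> j < length L \<longrightarrow> \<not> leq (L ! j) (L' ! j') \<longrightarrow> A $$ (j', j) = 0)
     \<and> (\<forall>z\<in>X. \<forall>v\<in>freev leq L z.
          C z *\<^sub>v v = 0\<^sub>v (r z) \<longleftrightarrow> (\<exists>u\<in>freev leq L' z. transpose_mat A *\<^sub>v u = v))"

lemma kernel_coverD:
  assumes "kernel_cover X leq L C r L' A"
  shows "set L' \<subseteq> X" "A \<in> carrier_mat (length L') (length L)"
    "\<And>j' j. j' < length L' \<Longrightarrow> j < length L \<Longrightarrow> \<not> leq (L ! j) (L' ! j') \<Longrightarrow> A $$ (j', j) = 0"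
    "\<And>z v. z \<in> X \<Longrightarrow> v \<in> freev leq L z
       \<Longrightarrow> C z *\<^sub>v v = 0\<^sub>v (r z) \<longleftrightarrow> (\<exists>u\<in>freev leq L' z. transpose_mat A *\<^sub>v u = v)"
  using assms unfolding kernel_cover_def by blast+

definition kernel_generators :: "('a \<Rightarrow> 'k vec list) \<Rightarrow> ('a \<times> nat) list \<Rightarrow> 'k vec list" where
  "kernel_generators bs ps = map (\<lambda>(z, k). bs z ! k) ps"

lemma length_kernel_generators [simp]: "length (kernel_generators bs ps) = length ps"
  by (simp add: kernel_generators_def)

lemma nth_kernel_generators [simp]:
  "p < length ps \<Longrightarrow> kernel_generators bs ps ! p = bs (fst (ps ! p)) ! snd (ps ! p)"
  by (simp add: kernel_generators_def case_prod_beta)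

context
  fixes X :: "'a set" and leq :: "'a \<Rightarrow> 'a \<Rightarrow> bool" and L :: "'a list" and C :: "'a \<Rightarrow> 'k::field mat"
    and r :: "'a \<Rightarrow> nat" and bs :: "'a \<Rightarrow> 'k vec list" and ps :: "('a \<times> nat) list"
  assumes refl: "\<And>z. z \<in> X \<Longrightarrow> leq z z"
    and C: "\<And>z. z \<in> X \<Longrightarrow> C z \<in> carrier_mat (r z) (length L)"
    and mono: "\<And>z z' v. z \<in> X \<Longrightarrow> z' \<in> X \<Longrightarrow> leq z z' \<Longrightarrow> v \<in> freev leq L z
       \<Longrightarrow> C z *\<^sub>v v = 0\<^sub>v (r z) \<Longrightarrow> C z' *\<^sub>v v = 0\<^sub>v (r z')"
    and bs: "\<And>z. z \<in> X \<Longrightarrow> spans (length L) (bs z) {v \<in> freev leq L z. C z *\<^sub>v v = 0\<^sub>v (r z)}"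
    and ps: "distinct ps" "set ps = Sigma X (\<lambda>z. {..<length (bs z)})"
begin

lemma kernel_generators_carrier:
  "mat_of_cols (length L) (kernel_generators bs ps) \<in> carrier_mat (length L) (length ps)"
  using mat_of_cols_carrier(1)[of "length L" "kernel_generators bs ps"] by simp

lemma kernel_generators_in_kernel:
  assumes p: "p < length ps"
  shows "fst (ps ! p) \<in> X" "kernel_generators bs ps ! p \<in> freev leq L (fst (ps ! p))"
    "C (fst (ps ! p)) *\<^sub>v kernel_generators bs ps ! p = 0\<^sub>v (r (fst (ps ! p)))"
proof -
  obtain x k where xk: "ps ! p = (x, k)" by fastforce
  have "(x, k) \<in> set ps" using p xk nth_mem by metis
  then have x: "x \<in> X" and k: "k < length (bs x)" using ps(2) by auto
  have "bs x ! k \<in> {v \<in> freev leq L x. C x *\<^sub>v v = 0\<^sub>v (r x)}"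
    using spansD(1)[OF bs[OF x]] nth_mem[OF k] by blast
  then show "fst (ps ! p) \<in> X" "kernel_generators bs ps ! p \<in> freev leq L (fst (ps ! p))"
    "C (fst (ps ! p)) *\<^sub>v kernel_generators bs ps ! p = 0\<^sub>v (r (fst (ps ! p)))"
    using x p xk by simp_all
qed

lemma kernel_subset_kernel_generators_image:
  assumes z: "z \<in> X" and v: "v \<in> freev leq L z" and Cv: "C z *\<^sub>v v = 0\<^sub>v (r z)"
  shows "\<exists>u\<in>freev leq (map fst ps) z. mat_of_cols (length L) (kernel_generators bs ps) *\<^sub>v u = v"
proof -
  obtain c where c: "\<And>j. j < length L \<Longrightarrow> v $ j = (\<Sum>k<length (bs z). c k * bs z ! k $ j)"
    using spansD(2)[OF bs[OF z]] v Cv by blast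
  define u where "u = vec (length ps) (\<lambda>p. if fst (ps ! p) = z then c (snd (ps ! p)) else 0)"
  have uc: "u \<in> carrier_vec (length ps)" and vc: "v \<in> carrier_vec (length L)"
    using v by (simp_all add: u_def freev_def)
  have "u \<in> freev leq (map fst ps) z" using refl[OF z] by (auto simp: freev_def u_def)
  moreover have "mat_of_cols (length L) (kernel_generators bs ps) *\<^sub>v u = v"
  proof (rule eq_vecI)
    fix j assume "j < dim_vec v"
    then have j: "j < length L" using vc by simp
    have "(mat_of_cols (length L) (kernel_generators bs ps) *\<^sub>v u) $ j
        = (\<Sum>p<length ps. mat_of_cols (length L) (kernel_generators bs ps) $$ (j, p) * u $ p)"
      using mult_mat_vec_nth[OF kernel_generators_carrier uc j] .
    also have "\<dots> = (\<Sum>p<length ps.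
        if fst (ps ! p) = z then bs z ! snd (ps ! p) $ j * c (snd (ps ! p)) else 0)"
      using j by (intro sum.cong) (auto simp: u_def mat_of_cols_index)
    also have "\<dots> = (\<Sum>k<length (bs z). bs z ! k $ j * c k)" by (rule sum_select_fst[OF ps z])
    also have "\<dots> = v $ j" using c[OF j] by (simp add: mult.commute)
    finally show "(mat_of_cols (length L) (kernel_generators bs ps) *\<^sub>v u) $ j = v $ j" .
  qed (use carrier_vecD[OF vc] in simp)
  ultimately show ?thesis by blast
qed

lemma kernel_generators_image_subset_kernel:
  assumes z: "z \<in> X" and u: "u \<in> freev leq (map fst ps) z"
  shows "C z *\<^sub>v (mat_of_cols (length L) (kernel_generators bs ps) *\<^sub>v u) = 0\<^sub>v (r z)"
proof -
  let ?W = "mat_of_cols (length L) (kernel_generators bs ps)"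
  have uc: "u \<in> carrier_vec (length ps)" using u by (simp add: freev_def)
  have "C z *\<^sub>v (?W *\<^sub>v u) = (C z * ?W) *\<^sub>v u" using C[OF z] kernel_generators_carrier uc by simp
  also have "\<dots> = 0\<^sub>m (r z) (length ps) *\<^sub>v u"
  proof (rule mult_mat_vec_eq_if_cols_eq[OF mult_carrier_mat[OF C[OF z] kernel_generators_carrier] _ uc])
    fix p assume p: "p < length ps" and "u $ p \<noteq> 0"
    then have "leq (fst (ps ! p)) z" using u by (auto simp: freev_def)
    then have zero: "C z *\<^sub>v kernel_generators bs ps ! p = 0\<^sub>v (r z)"
      using mono[OF kernel_generators_in_kernel(1)[OF p] z _ kernel_generators_in_kernel(2,3)[OF p]] by blast
    have "kernel_generators bs ps ! p \<in> carrier_vec (length L)"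
      using kernel_generators_in_kernel(2)[OF p] by (simp add: freev_def)
    then have "col ?W p = kernel_generators bs ps ! p" by (rule col_mat_of_cols[rotated]) (use p in simp)
    then show "col (C z * ?W) p = col (0\<^sub>m (r z) (length ps)) p"
      using col_mult2[OF C[OF z] kernel_generators_carrier p] zero p by simp
  qed simp
  also have "\<dots> = 0\<^sub>v (r z)" by (rule zero_mat_mult_vec[OF uc])
  finally show ?thesis .
qed

text \<open>The generator \<open>(z, k)\<close> of the covering free module sits at \<open>z\<close> and maps to the \<open>k\<close>-th
  spanning vector of the kernel at \<open>z\<close>.\<close>

lemma kernel_cover_kernel_generators:
  "kernel_cover X leq L C r (map fst ps) (mat_of_rows (length L) (kernel_generators bs ps))"
  unfolding kernel_cover_def transpose_mat_of_rows
proof (intro conjI allI impI ballI)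
  show "set (map fst ps) \<subseteq> X" by (rule set_map_fst_Sigma[OF ps(2)])
  show "mat_of_rows (length L) (kernel_generators bs ps) \<in> carrier_mat (length (map fst ps)) (length L)"
    using mat_of_rows_carrier(1)[of "length L" "kernel_generators bs ps"] by simp
next
  fix j' j assume "j' < length (map fst ps)" "j < length L" "\<not> leq (L ! j) (map fst ps ! j')"
  then show "mat_of_rows (length L) (kernel_generators bs ps) $$ (j', j) = 0"
    using kernel_generators_in_kernel(2)[of j'] by (simp add: mat_of_rows_index freev_def)
next
  fix z and v :: "'k vec" assume "z \<in> X" "v \<in> freev leq L z"
  then show "C z *\<^sub>v v = 0\<^sub>v (r z)
      \<longleftrightarrow> (\<exists>u\<in>freev leq (map fst ps) z. mat_of_cols (length L) (kernel_generators bs ps) *\<^sub>v u = v)"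
    using kernel_subset_kernel_generators_image kernel_generators_image_subset_kernel by blast
qed

end

lemma kernel_cover_exists:
  fixes C :: "'a \<Rightarrow> 'k::field mat"
  assumes fp: "finite_poset X leq"
    and C: "\<And>z. z \<in> X \<Longrightarrow> C z \<in> carrier_mat (r z) (length L)"
    and mono: "\<And>z z' v. z \<in> X \<Longrightarrow> z' \<in> X \<Longrightarrow> leq z z' \<Longrightarrow> v \<in> freev leq L z
       \<Longrightarrow> C z *\<^sub>v v = 0\<^sub>v (r z) \<Longrightarrow> C z' *\<^sub>v v = 0\<^sub>v (r z')"
  obtains L' A where "kernel_cover X leq L C r L' A"
proof -
  have "\<exists>bs. spans (length L) bs {v \<in> freev leq L z. C z *\<^sub>v v = 0\<^sub>v (r z)}" if z: "z \<in> X" for z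
  proof -
    have "{v \<in> freev leq L z. C z *\<^sub>v v = 0\<^sub>v (r z)}
        = {v \<in> mat_kernel (C z). \<forall>j<length L. \<not> leq (L ! j) z \<longrightarrow> v $ j = 0}"
      using C[OF z] by (auto simp: freev_def mat_kernel_def)
    moreover obtain bs where "spans (length L) bs
        {v \<in> mat_kernel (C z). \<forall>j<length L. \<not> leq (L ! j) z \<longrightarrow> v $ j = 0}"
      by (rule support_kernel_spanned[OF C[OF z], where S = "\<lambda>j. leq (L ! j) z"])
    ultimately show ?thesis by auto
  qed
  then have "\<forall>z\<in>X. \<exists>bs. spans (length L) bs {v \<in> freev leq L z. C z *\<^sub>v v = 0\<^sub>v (r z)}" by blast
  from bchoice[OF this] obtain bs
    where "\<forall>z\<in>X. spans (length L) (bs z) {v \<in> freev leq L z. C z *\<^sub>v v = 0\<^sub>v (r z)}" by blast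
  then have bs: "\<And>z. z \<in> X \<Longrightarrow> spans (length L) (bs z) {v \<in> freev leq L z. C z *\<^sub>v v = 0\<^sub>v (r z)}"
    by blast
  have "finite (Sigma X (\<lambda>z. {..<length (bs z)}))" using finite_posetD(1)[OF fp] by auto
  then obtain ps where ps: "distinct ps" "set ps = Sigma X (\<lambda>z. {..<length (bs z)})"
    using finite_distinct_list by metis
  show ?thesis by (rule that[OF kernel_cover_kernel_generators[OF finite_posetD(2)[OF fp] C mono bs ps]])
qed

lemma kernel_cover_exists_const:
  assumes fp: "finite_poset X leq" and B: "B \<in> carrier_mat r (length L)"
  obtains L' A where "kernel_cover X leq L (\<lambda>_. B) (\<lambda>_. r) L' A"
  by (rule kernel_cover_exists[OF fp, where C = "\<lambda>_. B" and r = "\<lambda>_. r" and L = L]) (use B that in auto)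

lemma kernel_cover_choice:
  assumes fp: "finite_poset X leq"
  obtains nc :: "'a list \<times> 'a list \<times> 'k::field mat \<Rightarrow> 'a list \<times> 'k mat"
  where "\<And>L0 L A. set L \<subseteq> X \<Longrightarrow> A \<in> carrier_mat (length L) (length L0)
    \<Longrightarrow> kernel_cover X leq L (\<lambda>_. transpose_mat A) (\<lambda>_. length L0) (fst (nc (L0, L, A))) (snd (nc (L0, L, A)))"
proof -
  have "\<forall>p :: 'a list \<times> 'a list \<times> 'k mat. \<exists>q. set (fst (snd p)) \<subseteq> X \<and> snd (snd p) \<in> carrier_mat (length (fst (snd p))) (length (fst p))
      \<longrightarrow> kernel_cover X leq (fst (snd p)) (\<lambda>_. transpose_mat (snd (snd p))) (\<lambda>_. length (fst p)) (fst q) (snd q)"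
  proof
    fix p :: "'a list \<times> 'a list \<times> 'k mat"
    obtain L0 L A where p: "p = (L0, L, A)" by (cases p) auto
    show "\<exists>q. set (fst (snd p)) \<subseteq> X \<and> snd (snd p) \<in> carrier_mat (length (fst (snd p))) (length (fst p))
      \<longrightarrow> kernel_cover X leq (fst (snd p)) (\<lambda>_. transpose_mat (snd (snd p))) (\<lambda>_. length (fst p)) (fst q) (snd q)"
    proof (cases "A \<in> carrier_mat (length L) (length L0)")
      case True
      then have "transpose_mat A \<in> carrier_mat (length L0) (length L)" by simp
      then obtain L' A' where "kernel_cover X leq L (\<lambda>_. transpose_mat A) (\<lambda>_. length L0) L' A'"
        by (rule kernel_cover_exists_const[OF fp])
      then show ?thesis using p by (intro exI[of _ "(L', A')"]) simp
    qed (simp add: p)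
  qed
  from choice[OF this] obtain nc :: "'a list \<times> 'a list \<times> 'k mat \<Rightarrow> 'a list \<times> 'k mat"
    where nc: "\<forall>p. set (fst (snd p)) \<subseteq> X
      \<and> snd (snd p) \<in> carrier_mat (length (fst (snd p))) (length (fst p))
      \<longrightarrow> kernel_cover X leq (fst (snd p)) (\<lambda>_. transpose_mat (snd (snd p))) (\<lambda>_. length (fst p))
            (fst (nc p)) (snd (nc p))"
    by blast
  show ?thesis
  proof (rule that)
    fix L0 L :: "'a list" and A :: "'k mat" assume "set L \<subseteq> X" "A \<in> carrier_mat (length L) (length L0)"
    then show "kernel_cover X leq L (\<lambda>_. transpose_mat A) (\<lambda>_. length L0) (fst (nc (L0, L, A))) (snd (nc (L0, L, A)))"
      using nc[rule_format, of "(L0, L, A)"] by simp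
  qed
qed

lemma kernel_cover_chain_exists:
  fixes C :: "'a \<Rightarrow> 'k::field mat"
  assumes fp: "finite_poset X leq" and cover: "kernel_cover X leq L C r L1 A1"
  obtains G :: "nat \<Rightarrow> 'a list" and D :: "nat \<Rightarrow> 'k mat"
  where "G 0 = L" "G 1 = L1" "D 0 = A1"
    "\<And>i. kernel_cover X leq (G (Suc i)) (\<lambda>_. transpose_mat (D i)) (\<lambda>_. length (G i))
       (G (Suc (Suc i))) (D (Suc i))"
proof -
  obtain nc :: "'a list \<times> 'a list \<times> 'k mat \<Rightarrow> 'a list \<times> 'k mat"
    where nc: "\<And>L0 L A. set L \<subseteq> X \<Longrightarrow> A \<in> carrier_mat (length L) (length L0) \<Longrightarrow> kernel_cover X leq L
      (\<lambda>_. transpose_mat A) (\<lambda>_. length L0) (fst (nc (L0, L, A))) (snd (nc (L0, L, A)))"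
  proof (rule kernel_cover_choice[OF fp])
    fix nc :: "'a list \<times> 'a list \<times> 'k mat \<Rightarrow> 'a list \<times> 'k mat"
    assume "\<And>L0 L A. set L \<subseteq> X \<Longrightarrow> A \<in> carrier_mat (length L) (length L0) \<Longrightarrow> kernel_cover X leq L
      (\<lambda>_. transpose_mat A) (\<lambda>_. length L0) (fst (nc (L0, L, A))) (snd (nc (L0, L, A)))"
    then show thesis by (rule that)
  qed
  define R where "R i = ((\<lambda>p. (fst (snd p), nc p)) ^^ i) (L, L1, A1)" for i
  have R_0: "R 0 = (L, L1, A1)" and R_Suc: "R (Suc i) = (fst (snd (R i)), nc (R i))" for i
    by (simp_all add: R_def)
  have step_if: "kernel_cover X leq (fst (snd (R i))) (\<lambda>_. transpose_mat (snd (snd (R i))))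
      (\<lambda>_. length (fst (R i))) (fst (nc (R i))) (snd (nc (R i)))"
    if "set (fst (snd (R i))) \<subseteq> X" "snd (snd (R i)) \<in> carrier_mat (length (fst (snd (R i)))) (length (fst (R i)))"
    for i
    using nc[OF that] by simp
  have "set (fst (snd (R i))) \<subseteq> X \<and> snd (snd (R i)) \<in> carrier_mat (length (fst (snd (R i)))) (length (fst (R i)))"
    for i
  proof (induction i)
    case 0
    show ?case using kernel_coverD(1,2)[OF cover] by (simp add: R_0)
  next
    case (Suc i)
    then show ?case using kernel_coverD(1,2)[OF step_if[of i]] by (simp add: R_Suc)
  qed
  then have step: "kernel_cover X leq (fst (snd (R i))) (\<lambda>_. transpose_mat (snd (snd (R i))))
      (\<lambda>_. length (fst (R i))) (fst (nc (R i))) (snd (nc (R i)))" for i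
    using step_if by blast
  show ?thesis
    by (rule that[of "\<lambda>i. fst (R i)" "\<lambda>i. snd (snd (R i))"]) (simp_all add: R_0 R_Suc step One_nat_def)
qed

lemma augmat_carrier: "augmat leq M E z \<in> carrier_mat (dimM M z) (length (gens E 0))"
  by (simp add: augmat_def)

lemma col_augmat:
  assumes M: "is_pmod X leq M" and gens: "set (gens E 0) \<subseteq> X" and j: "j < length (gens E 0)"
    and aug: "aug E j \<in> carrier_vec (dimM M (gens E 0 ! j))" and z: "z \<in> X"
  shows "col (augmat leq M E z) j
    = (if leq (gens E 0 ! j) z then mapM M (gens E 0 ! j) z *\<^sub>v aug E j else 0\<^sub>v (dimM M z))"
proof (cases "leq (gens E 0 ! j) z")
  case True
  have "gens E 0 ! j \<in> X" using gens j by auto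
  then show ?thesis using is_pmodD(1)[OF M _ z True] aug True j by (auto simp: augmat_def intro!: eq_vecI)
qed (use j in \<open>auto simp: augmat_def intro!: eq_vecI\<close>)

lemma augmat_natural:
  assumes fp: "finite_poset X leq" and M: "is_pmod X leq M" and gens: "set (gens E 0) \<subseteq> X"
    and aug: "\<And>j. j < length (gens E 0) \<Longrightarrow> aug E j \<in> carrier_vec (dimM M (gens E 0 ! j))"
    and z: "z \<in> X" "z' \<in> X" "leq z z'" and v: "v \<in> freev leq (gens E 0) z"
  shows "augmat leq M E z' *\<^sub>v v = mapM M z z' *\<^sub>v (augmat leq M E z *\<^sub>v v)"
proof -
  let ?L = "gens E 0"
  have Mzz': "mapM M z z' \<in> carrier_mat (dimM M z') (dimM M z)" using is_pmodD(1)[OF M z] .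
  have vc: "v \<in> carrier_vec (length ?L)" using v by (simp add: freev_def)
  have "augmat leq M E z' *\<^sub>v v = (mapM M z z' * augmat leq M E z) *\<^sub>v v"
  proof (rule mult_mat_vec_eq_if_cols_eq[OF augmat_carrier mult_carrier_mat[OF Mzz' augmat_carrier] vc])
    fix j assume j: "j < length ?L" and "v $ j \<noteq> 0"
    then have le: "leq (?L ! j) z" using v by (auto simp: freev_def)
    have x: "?L ! j \<in> X" using gens j by auto
    have "col (mapM M z z' * augmat leq M E z) j = mapM M z z' *\<^sub>v (mapM M (?L ! j) z *\<^sub>v aug E j)"
      using col_mult2[OF Mzz' augmat_carrier j] col_augmat[OF M gens j aug[OF j] z(1)] le by simp
    also have "\<dots> = (mapM M z z' * mapM M (?L ! j) z) *\<^sub>v aug E j"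
      using Mzz' is_pmodD(1)[OF M x z(1) le] aug[OF j] by simp
    also have "\<dots> = mapM M (?L ! j) z' *\<^sub>v aug E j"
      using is_pmodD(3)[OF M x z(1) z(2) le z(3)] by simp
    also have "\<dots> = col (augmat leq M E z') j"
      using col_augmat[OF M gens j aug[OF j] z(2)] finite_posetD(3)[OF fp x z(1) z(2) le z(3)] by simp
    finally show "col (augmat leq M E z') j = col (mapM M z z' * augmat leq M E z) j" by simp
  qed
  then show ?thesis using Mzz' vc augmat_carrier[of leq M E z] by simp
qed

lemma augmat_unit_vecs_surj:
  assumes M: "is_pmod X leq M" and z: "z \<in> X" and refl: "leq z z"
    and ps: "distinct ps" "set ps = Sigma X (\<lambda>x. {..<dimM M x})"
    and gens: "gens E 0 = map fst ps"
    and aug: "\<And>p. p < length ps \<Longrightarrow> aug E p = unit_vec (dimM M (fst (ps ! p))) (snd (ps ! p))"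
    and w: "w \<in> carrier_vec (dimM M z)"
  shows "\<exists>v\<in>freev leq (gens E 0) z. augmat leq M E z *\<^sub>v v = w"
proof -
  define v where "v = vec (length ps) (\<lambda>p. if fst (ps ! p) = z then w $ snd (ps ! p) else 0)"
  have "v \<in> freev leq (gens E 0) z" using refl by (auto simp: freev_def v_def gens)
  moreover have "augmat leq M E z *\<^sub>v v = w"
  proof (rule eq_vecI)
    fix i assume "i < dim_vec w"
    then have i: "i < dimM M z" using w by simp
    have vc: "v \<in> carrier_vec (length (gens E 0))" by (simp add: v_def gens)
    have entry: "augmat leq M E z $$ (i, p) * v $ p = (if fst (ps ! p) = z
        then unit_vec (dimM M z) (snd (ps ! p)) $ i * w $ snd (ps ! p) else 0)" if p: "p < length ps" for p
    proof (cases "fst (ps ! p) = z")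
      case True
      then show ?thesis using i p refl by (simp add: augmat_def gens aug v_def is_pmodD(2)[OF M z])
    qed (simp add: v_def p)
    have "(augmat leq M E z *\<^sub>v v) $ i = (\<Sum>p<length ps. augmat leq M E z $$ (i, p) * v $ p)"
      using mult_mat_vec_nth[OF augmat_carrier vc i] by (simp add: gens)
    also have "\<dots> = (\<Sum>k<dimM M z. unit_vec (dimM M z) k $ i * w $ k)"
      using sum_select_fst[OF ps z] entry by simp
    also have "\<dots> = (\<Sum>k<dimM M z. if k = i then w $ k else 0)"
      using i by (intro sum.cong) simp_all
    also have "\<dots> = w $ i" using i by simp
    finally show "(augmat leq M E z *\<^sub>v v) $ i = w $ i" .
  qed (simp add: carrier_vecD[OF w] augmat_def)
  ultimately show ?thesis by blast
qed

lemma is_resolutionI_kernel_cover: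
  fixes M :: "('a, 'k::field) pmod"
  assumes gens: "set (gens E 0) \<subseteq> X"
    and aug: "\<And>j. j < length (gens E 0) \<Longrightarrow> aug E j \<in> carrier_vec (dimM M (gens E 0 ! j))"
    and surj: "\<And>z w. z \<in> X \<Longrightarrow> w \<in> carrier_vec (dimM M z)
       \<Longrightarrow> \<exists>v\<in>freev leq (gens E 0) z. augmat leq M E z *\<^sub>v v = w"
    and cover0: "kernel_cover X leq (gens E 0) (augmat leq M E) (dimM M) (gens E 1) (bd E 0)"
    and cover: "\<And>i. kernel_cover X leq (gens E (Suc i)) (\<lambda>_. transpose_mat (bd E i))
       (\<lambda>_. length (gens E i)) (gens E (Suc (Suc i))) (bd E (Suc i))"
  shows "is_resolution X leq M E"
proof -
  have some_cover: "\<exists>C r. kernel_cover X leq (gens E i) C r (gens E (Suc i)) (bd E i)" for i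
  proof (cases i)
    case 0
    then show ?thesis using cover0 by (intro exI) (simp add: One_nat_def)
  next
    case (Suc k)
    then show ?thesis using cover[of k] by (intro exI) simp
  qed
  have gens_X: "set (gens E i) \<subseteq> X" for i
  proof (cases i)
    case (Suc k)
    then show ?thesis using some_cover[of k] kernel_coverD(1) by blast
  qed (use gens in simp)
  show ?thesis
    unfolding is_resolution_def bdmap_def
  proof (intro conjI allI impI ballI)
    show "bd E i \<in> carrier_mat (length (gens E (Suc i))) (length (gens E i))" for i
      using some_cover[of i] kernel_coverD(2) by blast
    show "bd E i $$ (j', j) = 0" if "j' < length (gens E (Suc i))" "j < length (gens E i)"
      "\<not> leq (gens E i ! j) (gens E (Suc i) ! j')" for i j' j
      using some_cover[of i] kernel_coverD(3) that by blast
  next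
    fix z and v :: "'k vec" assume "z \<in> X" "v \<in> freev leq (gens E 0) z"
    then show "augmat leq M E z *\<^sub>v v = 0\<^sub>v (dimM M z)
        \<longleftrightarrow> (\<exists>u\<in>freev leq (gens E 1) z. transpose_mat (bd E 0) *\<^sub>v u = v)"
      by (rule kernel_coverD(4)[OF cover0])
  next
    fix z i and v :: "'k vec" assume "z \<in> X" "v \<in> freev leq (gens E (Suc i)) z"
    then show "transpose_mat (bd E i) *\<^sub>v v = 0\<^sub>v (length (gens E i))
        \<longleftrightarrow> (\<exists>u\<in>freev leq (gens E (Suc (Suc i))) z. transpose_mat (bd E (Suc i)) *\<^sub>v u = v)"
      by (rule kernel_coverD(4)[OF cover])
  qed (use gens_X aug surj in auto)
qed

lemma augmat_cong:
  assumes "gens E 0 = gens E' 0" and "aug E = aug E'"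
  shows "augmat leq M E = augmat leq M E'"
  using assms by (simp add: augmat_def[abs_def] cong: if_cong)

lemma resolution_extending_augmentation:
  fixes M :: "('a, 'k::field) pmod"
  assumes fp: "finite_poset X leq" and M: "is_pmod X leq M" and gens_F: "set (gens F 0) \<subseteq> X"
    and aug_F: "\<And>j. j < length (gens F 0) \<Longrightarrow> aug F j \<in> carrier_vec (dimM M (gens F 0 ! j))"
    and surj_F: "\<And>z w. z \<in> X \<Longrightarrow> w \<in> carrier_vec (dimM M z)
       \<Longrightarrow> \<exists>v\<in>freev leq (gens F 0) z. augmat leq M F z *\<^sub>v v = w"
  obtains E where "is_resolution X leq M E"
proof -
  have mono: "augmat leq M F z' *\<^sub>v v = 0\<^sub>v (dimM M z')"
    if z: "z \<in> X" "z' \<in> X" "leq z z'" and v: "v \<in> freev leq (gens F 0) z"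
      and zero: "augmat leq M F z *\<^sub>v v = 0\<^sub>v (dimM M z)" for z z' v
    using augmat_natural[OF fp M gens_F aug_F z v] zero mult_mat_zero_vec[OF is_pmodD(1)[OF M z]] by simp
  have C0: "augmat leq M F z \<in> carrier_mat (dimM M z) (length (gens F 0))" if "z \<in> X" for z
    by (rule augmat_carrier)
  obtain L1 A1 where cover_F: "kernel_cover X leq (gens F 0) (augmat leq M F) (dimM M) L1 A1"
    by (rule kernel_cover_exists[OF fp C0 mono])
  obtain G D where G: "G 0 = gens F 0" "G 1 = L1" and D: "D 0 = A1"
    and cover: "\<And>i. kernel_cover X leq (G (Suc i)) (\<lambda>_. transpose_mat (D i)) (\<lambda>_. length (G i))
       (G (Suc (Suc i))) (D (Suc i))"
  proof (rule kernel_cover_chain_exists[OF fp cover_F])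
    fix G D assume "G 0 = gens F 0" "G 1 = L1" "D 0 = A1"
      "\<And>i. kernel_cover X leq (G (Suc i)) (\<lambda>_. transpose_mat (D i)) (\<lambda>_. length (G i))
         (G (Suc (Suc i))) (D (Suc i))"
    then show thesis by (rule that)
  qed
  define E :: "('a, 'k) fres" where "E = \<lparr>gens = G, bd = D, aug = aug F\<rparr>"
  have E: "gens E 0 = gens F 0" "aug E = aug F" by (simp_all add: E_def G)
  show ?thesis
  proof (rule that, rule is_resolutionI_kernel_cover)
    show "kernel_cover X leq (gens E 0) (augmat leq M E) (dimM M) (gens E 1) (bd E 0)"
      unfolding augmat_cong[OF E] using cover_F G D by (simp add: E_def)
    show "kernel_cover X leq (gens E (Suc i)) (\<lambda>_. transpose_mat (bd E i))
        (\<lambda>_. length (gens E i)) (gens E (Suc (Suc i))) (bd E (Suc i))" for i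
      using cover by (simp add: E_def)
  qed (use gens_F aug_F surj_F E augmat_cong[OF E] in auto)
qed

text \<open>The augmentation sends one generator \<open>(z, k)\<close> at \<open>z\<close> to each basis vector \<open>e\<^sub>k\<close> of \<open>M z\<close>.\<close>

theorem resolution_exists:
  fixes M :: "('a, 'k::field) pmod"
  assumes fp: "finite_poset X leq" and M: "is_pmod X leq M"
  obtains E where "is_resolution X leq M E"
proof -
  have "finite (Sigma X (\<lambda>z. {..<dimM M z}))" using finite_posetD(1)[OF fp] by auto
  then obtain ps where ps: "distinct ps" "set ps = Sigma X (\<lambda>z. {..<dimM M z})"
    using finite_distinct_list by metis
  define E0 :: "('a, 'k) fres" where "E0 = \<lparr>gens = \<lambda>_. map fst ps, bd = \<lambda>_. 0\<^sub>m 0 0,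
    aug = \<lambda>p. unit_vec (dimM M (fst (ps ! p))) (snd (ps ! p))\<rparr>"
  have gens0: "gens E0 0 = map fst ps" by (simp add: E0_def)
  show ?thesis
  proof (rule resolution_extending_augmentation[OF fp M, where F = E0])
    show "set (gens E0 0) \<subseteq> X" unfolding gens0 by (rule set_map_fst_Sigma[OF ps(2)])
    show "aug E0 j \<in> carrier_vec (dimM M (gens E0 0 ! j))" if "j < length (gens E0 0)" for j
      using that by (simp add: E0_def)
    show "\<exists>v\<in>freev leq (gens E0 0) z. augmat leq M E0 z *\<^sub>v v = w"
      if "z \<in> X" "w \<in> carrier_vec (dimM M z)" for z w
      by (rule augmat_unit_vecs_surj[OF M that(1) finite_posetD(2)[OF fp that(1)] ps gens0 _ that(2)])
        (simp add: E0_def)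
  qed (rule that)
qed

section \<open>Pulling resolutions back along Galois insertions\<close>

lemma is_resolutionD:
  assumes "is_resolution X leq M E"
  shows "set (gens E i) \<subseteq> X"
    "bd E i \<in> carrier_mat (length (gens E (Suc i))) (length (gens E i))"
    "\<And>j' j. j' < length (gens E (Suc i)) \<Longrightarrow> j < length (gens E i)
       \<Longrightarrow> \<not> leq (gens E i ! j) (gens E (Suc i) ! j') \<Longrightarrow> bd E i $$ (j', j) = 0"
    "\<And>j. j < length (gens E 0) \<Longrightarrow> aug E j \<in> carrier_vec (dimM M (gens E 0 ! j))"
    "\<And>z w. z \<in> X \<Longrightarrow> w \<in> carrier_vec (dimM M z)
       \<Longrightarrow> \<exists>v\<in>freev leq (gens E 0) z. augmat leq M E z *\<^sub>v v = w"
    "\<And>z v. z \<in> X \<Longrightarrow> v \<in> freev leq (gens E 0) z \<Longrightarrow> augmat leq M E z *\<^sub>v v = 0\<^sub>v (dimM M z)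
       \<longleftrightarrow> (\<exists>u\<in>freev leq (gens E 1) z. bdmap E 0 u = v)"
    "\<And>z v. z \<in> X \<Longrightarrow> v \<in> freev leq (gens E (Suc i)) z \<Longrightarrow> bdmap E i v = 0\<^sub>v (length (gens E i))
       \<longleftrightarrow> (\<exists>u\<in>freev leq (gens E (Suc (Suc i))) z. bdmap E (Suc i) u = v)"
  using assms unfolding is_resolution_def by blast+

lemma freev_map_galois:
  assumes gi: "galois_insertion Q leQ P leq f g" and L: "set L \<subseteq> Q" and z: "z \<in> P"
  shows "freev leq (map f L) z = freev leQ L (g z)"
proof -
  have "leq (f (L ! j)) z \<longleftrightarrow> leQ (L ! j) (g z)" if "j < length L" for j
  proof -
    have "L ! j \<in> Q" using L that by auto
    then show ?thesis by (rule galois_insertionD(5)[OF gi _ z])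
  qed
  then show ?thesis unfolding freev_def by auto
qed

text \<open>Along \<open>g\<close> the summand \<open>k[Q]\<^sub>q\<close> pulls back to \<open>k[P]\<^bsub>f q\<^esub>\<close>; its generator is sent to the
  image of the generator of \<open>E\<close> under \<open>q \<le> g (f q)\<close>, transported to \<open>M\<close> by \<open>\<phi>\<close>.\<close>

definition pullback_fres :: "('q \<Rightarrow> 'p) \<Rightarrow> ('p \<Rightarrow> 'q) \<Rightarrow> ('p \<Rightarrow> 'k mat) \<Rightarrow> ('q, 'k::field) pmod
    \<Rightarrow> ('q, 'k) fres \<Rightarrow> ('p, 'k) fres" where
  "pullback_fres f g \<phi> \<Gamma> E = \<lparr>gens = \<lambda>i. map f (gens E i), bd = bd E,
     aug = \<lambda>j. \<phi> (f (gens E 0 ! j)) *\<^sub>v (mapM \<Gamma> (gens E 0 ! j) (g (f (gens E 0 ! j))) *\<^sub>v aug E j)\<rparr>"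

context
  fixes P :: "'p set" and leq :: "'p \<Rightarrow> 'p \<Rightarrow> bool" and Q :: "'q set" and leQ :: "'q \<Rightarrow> 'q \<Rightarrow> bool"
    and f :: "'q \<Rightarrow> 'p" and g :: "'p \<Rightarrow> 'q" and \<Gamma> :: "('q, 'k::field) pmod" and M :: "('p, 'k) pmod"
    and \<phi> :: "'p \<Rightarrow> 'k mat"
  assumes fp: "finite_poset P leq" and gi: "galois_insertion Q leQ P leq f g"
    and \<Gamma>: "is_pmod Q leQ \<Gamma>" and M: "is_pmod P leq M"
    and \<phi>: "\<And>x. x \<in> P \<Longrightarrow> \<phi> x \<in> carrier_mat (dimM M x) (dimM \<Gamma> (g x))"
    and \<phi>_inv: "\<And>x. x \<in> P \<Longrightarrow> invertible_mat (\<phi> x)"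
    and \<phi>_natural: "\<And>x y. x \<in> P \<Longrightarrow> y \<in> P \<Longrightarrow> leq x y \<Longrightarrow> \<phi> y * mapM \<Gamma> (g x) (g y) = mapM M x y * \<phi> x"
begin

lemma dimM_pullback: "x \<in> P \<Longrightarrow> dimM \<Gamma> (g x) = dimM M x"
  using \<phi> \<phi>_inv unfolding invertible_mat_def square_mat.simps by (metis carrier_matD)

lemma iso_carrier_square: "x \<in> P \<Longrightarrow> \<phi> x \<in> carrier_mat (dimM M x) (dimM M x)"
  using \<phi> dimM_pullback by simp

lemma pullback_generator_natural:
  assumes q: "q \<in> Q" and z: "z \<in> P" and le: "leq (f q) z" and a: "a \<in> carrier_vec (dimM \<Gamma> q)"
  shows "mapM M (f q) z *\<^sub>v (\<phi> (f q) *\<^sub>v (mapM \<Gamma> q (g (f q)) *\<^sub>v a)) = \<phi> z *\<^sub>v (mapM \<Gamma> q (g z) *\<^sub>v a)"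
proof -
  have fq: "f q \<in> P" and gfq: "g (f q) \<in> Q" and gz: "g z \<in> Q"
    using galois_insertionD(1,2)[OF gi] q z by auto
  have unit: "leQ q (g (f q))"
    using galois_insertionD(5)[OF gi q fq] finite_posetD(2)[OF fp fq] by simp
  have le': "leQ (g (f q)) (g z)" using galois_insertionD(4)[OF gi fq z le] .
  have \<Gamma>1: "mapM \<Gamma> q (g (f q)) \<in> carrier_mat (dimM \<Gamma> (g (f q))) (dimM \<Gamma> q)"
    using is_pmodD(1)[OF \<Gamma> q gfq unit] .
  have \<Gamma>2: "mapM \<Gamma> (g (f q)) (g z) \<in> carrier_mat (dimM \<Gamma> (g z)) (dimM \<Gamma> (g (f q)))"
    using is_pmodD(1)[OF \<Gamma> gfq gz le'] .
  have "mapM M (f q) z *\<^sub>v (\<phi> (f q) *\<^sub>v (mapM \<Gamma> q (g (f q)) *\<^sub>v a))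
      = (mapM M (f q) z * \<phi> (f q)) *\<^sub>v (mapM \<Gamma> q (g (f q)) *\<^sub>v a)"
    using is_pmodD(1)[OF M fq z le] \<phi>[OF fq] \<Gamma>1 a by simp
  also have "mapM M (f q) z * \<phi> (f q) = \<phi> z * mapM \<Gamma> (g (f q)) (g z)"
    using \<phi>_natural[OF fq z le] by simp
  also have "(\<phi> z * mapM \<Gamma> (g (f q)) (g z)) *\<^sub>v (mapM \<Gamma> q (g (f q)) *\<^sub>v a)
      = \<phi> z *\<^sub>v ((mapM \<Gamma> (g (f q)) (g z) * mapM \<Gamma> q (g (f q))) *\<^sub>v a)"
    using \<phi>[OF z] \<Gamma>1 \<Gamma>2 a by simp
  also have "mapM \<Gamma> (g (f q)) (g z) * mapM \<Gamma> q (g (f q)) = mapM \<Gamma> q (g z)"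
    using is_pmodD(3)[OF \<Gamma> q gfq gz unit le'] .
  finally show ?thesis .
qed

lemma augmat_pullback_fres:
  assumes gens: "set (gens E 0) \<subseteq> Q"
    and aug: "\<And>j. j < length (gens E 0) \<Longrightarrow> aug E j \<in> carrier_vec (dimM \<Gamma> (gens E 0 ! j))"
    and z: "z \<in> P"
  shows "augmat leq M (pullback_fres f g \<phi> \<Gamma> E) z = \<phi> z * augmat leQ \<Gamma> E (g z)"
proof (rule mat_col_eqI)
  let ?E' = "pullback_fres f g \<phi> \<Gamma> E" and ?u = "\<lambda>j. gens E 0 ! j"
  have gz: "g z \<in> Q" using galois_insertionD(2)[OF gi z] .
  have gens': "set (gens ?E' 0) \<subseteq> P"
    using gens galois_insertionD(1)[OF gi] by (auto simp: pullback_fres_def)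
  fix j assume "j < dim_col (\<phi> z * augmat leQ \<Gamma> E (g z))"
  then have j: "j < length (gens E 0)" by (simp add: augmat_def)
  have u: "?u j \<in> Q" using gens j by auto
  then have fu: "f (?u j) \<in> P" using galois_insertionD(1)[OF gi] by blast
  have aug': "aug ?E' j \<in> carrier_vec (dimM M (gens ?E' 0 ! j))"
    using \<phi>[OF fu] j by (intro carrier_vecI) (simp add: pullback_fres_def)
  have iff: "leq (f (?u j)) z \<longleftrightarrow> leQ (?u j) (g z)" using galois_insertionD(5)[OF gi u z] .
  have "col (augmat leq M ?E' z) j
      = (if leq (f (?u j)) z then mapM M (f (?u j)) z *\<^sub>v aug ?E' j else 0\<^sub>v (dimM M z))"
    using col_augmat[OF M gens' _ aug' z] j by (simp add: pullback_fres_def)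
  also have "\<dots> = \<phi> z *\<^sub>v (if leQ (?u j) (g z) then mapM \<Gamma> (?u j) (g z) *\<^sub>v aug E j else 0\<^sub>v (dimM \<Gamma> (g z)))"
    using pullback_generator_natural[OF u z _ aug[OF j]] mult_mat_zero_vec[OF \<phi>[OF z]] iff
    by (simp add: pullback_fres_def)
  also have "\<dots> = col (\<phi> z * augmat leQ \<Gamma> E (g z)) j"
    using col_mult2[OF \<phi>[OF z] augmat_carrier j] col_augmat[OF \<Gamma> gens j aug[OF j] gz] by simp
  finally show "col (augmat leq M ?E' z) j = col (\<phi> z * augmat leQ \<Gamma> E (g z)) j" .
qed (use \<phi>[OF z] in \<open>simp_all add: augmat_def pullback_fres_def\<close>)

context
  fixes E :: "('q, 'k) fres"
  assumes E: "is_resolution Q leQ \<Gamma> E"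
begin

lemma freev_pullback_fres:
  assumes "z \<in> P"
  shows "freev leq (gens (pullback_fres f g \<phi> \<Gamma> E) k) z = (freev leQ (gens E k) (g z) :: 'k vec set)"
  using freev_map_galois[OF gi is_resolutionD(1)[OF E] assms] by (simp add: pullback_fres_def)

lemma augmat_pullback_fres_mult_vec:
  assumes z: "z \<in> P" and v: "v \<in> freev leQ (gens E 0) (g z)"
  shows "augmat leq M (pullback_fres f g \<phi> \<Gamma> E) z *\<^sub>v v = \<phi> z *\<^sub>v (augmat leQ \<Gamma> E (g z) *\<^sub>v v)"
  using augmat_pullback_fres[OF is_resolutionD(1,4)[OF E] z] \<phi>[OF z] augmat_carrier[of leQ \<Gamma> E "g z"] v
  by (simp add: freev_def)

lemma augmat_pullback_fres_surj:
  assumes z: "z \<in> P" and w: "w \<in> carrier_vec (dimM M z)"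
  shows "\<exists>v\<in>freev leq (gens (pullback_fres f g \<phi> \<Gamma> E) 0) z. augmat leq M (pullback_fres f g \<phi> \<Gamma> E) z *\<^sub>v v = w"
proof -
  obtain w' where w': "w' \<in> carrier_vec (dimM M z)" "\<phi> z *\<^sub>v w' = w"
    using invertible_mult_mat_vec_surj[OF iso_carrier_square[OF z] \<phi>_inv[OF z] w] by metis
  obtain v where "v \<in> freev leQ (gens E 0) (g z)" "augmat leQ \<Gamma> E (g z) *\<^sub>v v = w'"
    using is_resolutionD(5)[OF E galois_insertionD(2)[OF gi z]] w' dimM_pullback[OF z] by metis
  then show ?thesis using augmat_pullback_fres_mult_vec[OF z] w' freev_pullback_fres[OF z] by auto
qed

lemma augmat_pullback_fres_kernel:
  assumes z: "z \<in> P" and v': "v \<in> freev leq (gens (pullback_fres f g \<phi> \<Gamma> E) 0) z"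
  shows "augmat leq M (pullback_fres f g \<phi> \<Gamma> E) z *\<^sub>v v = 0\<^sub>v (dimM M z)
    \<longleftrightarrow> (\<exists>u\<in>freev leq (gens (pullback_fres f g \<phi> \<Gamma> E) 1) z. bdmap (pullback_fres f g \<phi> \<Gamma> E) 0 u = v)"
proof -
  have v: "v \<in> freev leQ (gens E 0) (g z)" using v' unfolding freev_pullback_fres[OF z] .
  have "augmat leQ \<Gamma> E (g z) *\<^sub>v v \<in> carrier_vec (dimM M z)"
    using augmat_carrier[of leQ \<Gamma> E "g z"] v dimM_pullback[OF z] by (simp add: freev_def)
  then have "augmat leq M (pullback_fres f g \<phi> \<Gamma> E) z *\<^sub>v v = 0\<^sub>v (dimM M z)
      \<longleftrightarrow> augmat leQ \<Gamma> E (g z) *\<^sub>v v = 0\<^sub>v (dimM \<Gamma> (g z))"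
    using augmat_pullback_fres_mult_vec[OF z v] invertible_mult_mat_vec_eq_0_iff[OF iso_carrier_square[OF z] \<phi>_inv[OF z]]
      dimM_pullback[OF z] by simp
  also have "\<dots> \<longleftrightarrow> (\<exists>u\<in>freev leQ (gens E 1) (g z). bdmap E 0 u = v)"
    using is_resolutionD(6)[OF E galois_insertionD(2)[OF gi z] v] .
  finally show ?thesis
    unfolding freev_pullback_fres[OF z] by (simp add: pullback_fres_def bdmap_def)
qed

lemma is_resolution_pullback_fres: "is_resolution P leq M (pullback_fres f g \<phi> \<Gamma> E)"
  unfolding is_resolution_def
proof (intro conjI allI impI ballI)
  let ?E' = "pullback_fres f g \<phi> \<Gamma> E"
  note gens = is_resolutionD(1)[OF E]
  have E': "gens ?E' k = map f (gens E k)" "bdmap ?E' = bdmap E" for k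
    by (simp_all add: pullback_fres_def bdmap_def[abs_def])
  show "set (gens ?E' k) \<subseteq> P" for k using gens[of k] galois_insertionD(1)[OF gi] E'(1) by auto
  show "bd ?E' k \<in> carrier_mat (length (gens ?E' (Suc k))) (length (gens ?E' k))" for k
    using is_resolutionD(2)[OF E] E'(1) by (simp add: pullback_fres_def)
  show "bd ?E' k $$ (j', j) = 0" if j': "j' < length (gens ?E' (Suc k))" and j: "j < length (gens ?E' k)"
    and not_le: "\<not> leq (gens ?E' k ! j) (gens ?E' (Suc k) ! j')" for k j' j
  proof -
    have "gens E k ! j \<in> Q" "gens E (Suc k) ! j' \<in> Q"
      using gens[of k] gens[of "Suc k"] j j' E'(1) by auto
    then have "\<not> leQ (gens E k ! j) (gens E (Suc k) ! j')"
      using not_le j j' E'(1) galois_insertionD(3)[OF gi] by auto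
    then show ?thesis using is_resolutionD(3)[OF E] j j' E'(1) by (simp add: pullback_fres_def)
  qed
  show "aug ?E' j \<in> carrier_vec (dimM M (gens ?E' 0 ! j))" if j: "j < length (gens ?E' 0)" for j
  proof -
    have "gens E 0 ! j \<in> Q" using gens[of 0] j E'(1) by auto
    then have "f (gens E 0 ! j) \<in> P" by (rule galois_insertionD(1)[OF gi])
    then have "\<phi> (f (gens E 0 ! j)) \<in> carrier_mat (dimM M (f (gens E 0 ! j))) (dimM \<Gamma> (g (f (gens E 0 ! j))))"
      by (rule \<phi>)
    then show ?thesis using j E'(1) by (intro carrier_vecI) (simp add: pullback_fres_def carrier_matD(1))
  qed
  show "\<exists>v\<in>freev leq (gens ?E' 0) z. augmat leq M ?E' z *\<^sub>v v = w"
    if "z \<in> P" "w \<in> carrier_vec (dimM M z)" for z w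
    using augmat_pullback_fres_surj[OF that] .
  show "augmat leq M ?E' z *\<^sub>v v = 0\<^sub>v (dimM M z) \<longleftrightarrow> (\<exists>u\<in>freev leq (gens ?E' 1) z. bdmap ?E' 0 u = v)"
    if "z \<in> P" "v \<in> freev leq (gens ?E' 0) z" for z v
    using augmat_pullback_fres_kernel[OF that] .
  show "bdmap ?E' k v = 0\<^sub>v (length (gens ?E' k))
      \<longleftrightarrow> (\<exists>u\<in>freev leq (gens ?E' (Suc (Suc k))) z. bdmap ?E' (Suc k) u = v)"
    if "z \<in> P" "v \<in> freev leq (gens ?E' (Suc k)) z" for z k v
    using that is_resolutionD(7)[OF E galois_insertionD(2)[OF gi that(1)]] freev_pullback_fres[OF that(1)] E'
    by simp
qed

end

end

lemma resolution_pullback_exists: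
  assumes fp: "finite_poset P leq" and gi: "galois_insertion Q leQ P leq f g"
    and \<Gamma>: "is_pmod Q leQ \<Gamma>" and M: "is_pmod P leq M"
    and iso: "pmod_iso P leq (pullback g \<Gamma>) M" and E: "is_resolution Q leQ \<Gamma> E"
  obtains E' where "is_resolution P leq M E'" "gens E' = (\<lambda>k. map f (gens E k))" "bd E' = bd E"
proof -
  obtain \<phi> where \<phi>: "\<And>x. x \<in> P \<Longrightarrow> \<phi> x \<in> carrier_mat (dimM M x) (dimM \<Gamma> (g x))"
    and \<phi>_inv: "\<And>x. x \<in> P \<Longrightarrow> invertible_mat (\<phi> x)"
    and \<phi>_natural: "\<And>x y. x \<in> P \<Longrightarrow> y \<in> P \<Longrightarrow> leq x y
       \<Longrightarrow> \<phi> y * mapM \<Gamma> (g x) (g y) = mapM M x y * \<phi> x"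
    using iso unfolding pmod_iso_def pullback_def by auto
  show ?thesis
    by (rule that[OF is_resolution_pullback_fres[OF fp gi \<Gamma> M \<phi> \<phi>_inv \<phi>_natural E]])
      (simp_all add: pullback_fres_def)
qed

section \<open>Comparison of the two distances\<close>

lemma distR_le_coupling_cost:
  assumes gens: "\<And>k. set (gens E k) \<subseteq> Q"
    and E1: "gens E1 = (\<lambda>k. map f (gens E k))" "bd E1 = bd E"
    and E2: "gens E2 = (\<lambda>k. map h (gens E k))" "bd E2 = bd E"
  shows "distR d E1 E2 \<le> coupling_cost d Q f h"
proof -
  have "is_matching E1 E2 (\<lambda>_ j. j)" using E1 E2 by (simp add: is_matching_def bij_betw_def)
  then have "distR d E1 E2 \<le> matching_cost d E1 E2 (\<lambda>_ j. j)"
    unfolding distR_def by (intro Inf_lower) blast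
  also have "\<dots> \<le> coupling_cost d Q f h"
    unfolding matching_cost_def coupling_cost_def
  proof (intro Sup_subset_mono insert_mono subsetI)
    fix x assume "x \<in> {ereal (d (gens E1 k ! j) (gens E2 k ! j)) |k j. j < length (gens E1 k)}"
    then obtain k j where x: "x = ereal (d (gens E1 k ! j) (gens E2 k ! j))" and j: "j < length (gens E k)"
      using E1 by auto
    then have "gens E k ! j \<in> Q" using gens[of k] nth_mem[OF j] by blast
    then show "x \<in> (\<lambda>q. ereal (d (f q) (h q))) ` Q" using x j E1 E2 by simp
  qed
  finally show ?thesis .
qed

lemma distB_le_coupling_cost:
  assumes fp: "finite_poset P leq" and M: "is_pmod P leq M" and N: "is_pmod P leq N"
    and coupling: "galois_coupling P leq M N Q leQ f g h i \<Gamma>"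
  shows "distB P leq d M N \<le> coupling_cost d Q f h"
proof -
  have fQ: "finite_poset Q leQ" and gi_M: "galois_insertion Q leQ P leq f g"
    and gi_N: "galois_insertion Q leQ P leq h i" and \<Gamma>: "is_pmod Q leQ \<Gamma>"
    and iso_M: "pmod_iso P leq (pullback g \<Gamma>) M" and iso_N: "pmod_iso P leq (pullback i \<Gamma>) N"
    using coupling unfolding galois_coupling_def by blast+
  obtain E where E: "is_resolution Q leQ \<Gamma> E" by (rule resolution_exists[OF fQ \<Gamma>])
  obtain E1 where E1: "is_resolution P leq M E1" "gens E1 = (\<lambda>k. map f (gens E k))" "bd E1 = bd E"
    by (rule resolution_pullback_exists[OF fp gi_M \<Gamma> M iso_M E])
  obtain E2 where E2: "is_resolution P leq N E2" "gens E2 = (\<lambda>k. map h (gens E k))" "bd E2 = bd E"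
    by (rule resolution_pullback_exists[OF fp gi_N \<Gamma> N iso_N E])
  have "\<forall>k. length (gens E1 k) = length (gens E2 k)" using E1(2) E2(2) by simp
  then have "distB P leq d M N \<le> distR d E1 E2"
    unfolding distB_def using E1(1) E2(1) by (intro Inf_lower) blast
  also have "\<dots> \<le> coupling_cost d Q f h"
    by (rule distR_le_coupling_cost[OF is_resolutionD(1)[OF E] E1(2,3) E2(2,3)])
  finally show ?thesis .
qed

theorem theorem5p2:
  fixes P :: "'p set" and leq :: "'p \<Rightarrow> 'p \<Rightarrow> bool" and d :: "'p \<Rightarrow> 'p \<Rightarrow> real"
    and M N :: "('p, 'k::field) pmod"
  assumes "finite_poset P leq" and "metric_on P d"
    and "is_pmod P leq M" and "is_pmod P leq N"
  shows "distB P leq d M N \<le> dGT P leq d M N"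
  unfolding dGT_def
  using distB_le_coupling_cost[OF assms(1,3,4)] by (intro Inf_greatest) auto

end
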